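(* Let $\mathbf v\in\mathbb Z^4$ satisfy $Q_{\mathcal D}(\mathbf v)=4$, and let $\mathcal C$ be the set of all integers occurring as a coordinate of some element of the orbit $\mathcal A[\mathbf v]$ (the curvatures of the corresponding integral hyperbolic Apollonian packing). Then the set of residues modulo $12$ of elements of $\mathcal C$ omits at least three congruence classes modulo $12$.
   Context: $Q_{\mathcal D}(a,b,c,d)=2(a^2+b^2+c^2+d^2)-(a+b+c+d)^2$. $\mathbf S_i$ ($i=1,\dots,4$) is the $4\times4$ integer matrix replacing the $i$-th coordinate $a_i$ of a column vector by $2\sum_{j\ne i}a_j-a_i$, other coordinates fixed; the Apollonian group $\mathcal A$ is the subgroup of $GL(4,\mathbb Z)$ they generate, and $\mathcal A[\mathbf v]=\{\mathbf U\mathbf v:\mathbf U\in\mathcal A\}$. *)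

theory Defs
  imports "HOL-Analysis.Analysis"
begin

definition Q_D :: "int ^ 4 \<Rightarrow> int" where
  "Q_D v = 2 * (\<Sum>i\<in>UNIV. (v $ i)^2) - (\<Sum>i\<in>UNIV. v $ i)^2"

definition apS :: "4 \<Rightarrow> int ^ 4 ^ 4" where
  "apS i = (\<chi> r c. if r = i then (if c = i then -1 else 2)
                    else (if r = c then 1 else 0))"

text \<open>The Apollonian group: the group generated by the S_i. Since every S_i is an
  involution, the generated group equals the generated monoid, which we define inductively.\<close>
inductive_set apollonian_group :: "(int ^ 4 ^ 4) set" where
  ap_id: "mat 1 \<in> apollonian_group"
| ap_step: "U \<in> apollonian_group \<Longrightarrow> apS i ** U \<in> apollonian_group"

definition apollonian_orbit :: "int ^ 4 \<Rightarrow> (int ^ 4) set" where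
  "apollonian_orbit v = {U *v v | U. U \<in> apollonian_group}"

definition curvatures :: "int ^ 4 \<Rightarrow> int set" where
  "curvatures v = {w $ k | w k. w \<in> apollonian_orbit v}"

end

theory Submission
  imports Defs
begin

text \<open>Each generator changes a single coordinate \<open>a\<^sub>i\<close> into
  \<open>a\<^sub>i + (2s - 4a\<^sub>i)\<close>, where \<open>s\<close> is the coordinate sum, and turns \<open>s\<close> into
  \<open>3s - 4a\<^sub>i\<close>. Since \<open>Q\<^sub>D(v) = 4\<close> forces \<open>s\<close> to be even, \<open>s\<close> stays even along the
  orbit and every element of \<open>\<A>[v]\<close> is coordinatewise congruent to \<open>v\<close> modulo 4.
  On the other hand \<open>Q\<^sub>D(v) mod 8\<close> only depends on the residues of \<open>v\<close> modulo 4, and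
  a permutation of \<open>(0,1,2,3)\<close> has \<open>Q\<^sub>D = -8\<close>; so the coordinates of \<open>v\<close> miss some
  residue \<open>r\<close> modulo 4, and no curvature is congruent to \<open>r\<close>, \<open>r + 4\<close> or \<open>r + 8\<close>
  modulo 12.\<close>

lemma apS_mult_vec_nth:
  fixes w :: "int ^ 4"
  shows "(apS i *v w) $ k = (if k = i then 2 * (\<Sum>j\<in>UNIV. w $ j) - 3 * w $ i else w $ k)"
proof (cases "k = i")
  case True
  have "(apS i *v w) $ k = (\<Sum>j\<in>UNIV. 2 * w $ j - (if j = i then 3 * w $ j else 0))"
    unfolding apS_def matrix_vector_mult_def using True by (auto intro!: sum.cong)
  also have "\<dots> = 2 * (\<Sum>j\<in>UNIV. w $ j) - 3 * w $ i"
    by (simp add: sum_subtractf sum_distrib_left)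
  finally show ?thesis using True by simp
next
  case False
  then have "(apS i *v w) $ k = (\<Sum>j\<in>UNIV. (if k = j then 1 else 0) * w $ j)"
    unfolding apS_def matrix_vector_mult_def by (auto intro!: sum.cong)
  also have "\<dots> = (\<Sum>j\<in>UNIV. if j = k then w $ j else 0)"
    by (rule sum.cong) auto
  finally show ?thesis using False by simp
qed

lemma sum_apS_mult_vec:
  fixes w :: "int ^ 4"
  shows "(\<Sum>k\<in>UNIV. (apS i *v w) $ k) = 3 * (\<Sum>k\<in>UNIV. w $ k) - 4 * w $ i"
proof -
  have "(\<Sum>k\<in>UNIV. (apS i *v w) $ k)
      = (\<Sum>k\<in>UNIV. w $ k + (if k = i then 2 * (\<Sum>j\<in>UNIV. w $ j) - 4 * w $ i else 0))"
    by (rule sum.cong) (auto simp: apS_mult_vec_nth)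
  then show ?thesis by (simp add: sum.distrib)
qed

lemma apS_mult_vec_cong_mod4:
  fixes w :: "int ^ 4"
  assumes "even (\<Sum>j\<in>UNIV. w $ j)"
  shows "(apS i *v w) $ k mod 4 = w $ k mod 4"
proof -
  from assms obtain m where "(\<Sum>j\<in>UNIV. w $ j) = 2 * m" by blast
  then have "(apS i *v w) $ k = w $ k + 4 * (if k = i then m - w $ i else 0)"
    by (simp add: apS_mult_vec_nth)
  then show ?thesis by (metis mod_mult_self2 mult.commute)
qed

lemma apollonian_orbit_cong_mod4:
  fixes v :: "int ^ 4"
  assumes "even (\<Sum>j\<in>UNIV. v $ j)" and "w \<in> apollonian_orbit v"
  shows "w $ k mod 4 = v $ k mod 4"
proof -
  from assms(2) obtain U where U: "U \<in> apollonian_group" and w: "w = U *v v"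
    unfolding apollonian_orbit_def by blast
  from U have "even (\<Sum>j\<in>UNIV. (U *v v) $ j) \<and> (\<forall>k. (U *v v) $ k mod 4 = v $ k mod 4)"
  proof (induction rule: apollonian_group.induct)
    case ap_id
    then show ?case using assms(1) by simp
  next
    case (ap_step U i)
    then show ?case
      by (simp add: matrix_vector_mul_assoc[symmetric] sum_apS_mult_vec apS_mult_vec_cong_mod4)
  qed
  then show ?thesis using w by blast
qed

lemma even_sum_if_even_Q_D:
  assumes "even (Q_D v)"
  shows "even (\<Sum>j\<in>UNIV. v $ j)"
  using assms unfolding Q_D_def by simp

lemma Q_D_add_4_mult_cong_mod8:
  "8 dvd Q_D (x + 4 *s y) - Q_D x"
proof -
  have "Q_D (x + 4 *s y) - Q_D x = 8 * (2 * (\<Sum>j\<in>UNIV. x $ j * y $ j) + 4 * (\<Sum>j\<in>UNIV. (y $ j)^2)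
      - (\<Sum>j\<in>UNIV. x $ j) * (\<Sum>j\<in>UNIV. y $ j) - 2 * (\<Sum>j\<in>UNIV. y $ j)^2)"
    unfolding Q_D_def sum_4 by (simp add: power2_eq_square algebra_simps)
  then show ?thesis by simp
qed

lemma Q_D_cong_mod8_residues:
  "8 dvd Q_D v - Q_D (\<chi> k. v $ k mod 4)"
proof -
  have "v = (\<chi> k. v $ k mod 4) + 4 *s (\<chi> k. v $ k div 4)"
    by (simp add: vec_eq_iff)
  then show ?thesis using Q_D_add_4_mult_cong_mod8 by metis
qed

lemma Q_D_permutation_0123:
  fixes r :: "int ^ 4"
  assumes "bij_betw (($) r) UNIV {0..<4}"
  shows "Q_D r = -8"
proof -
  have "{0..<4::int} = {0, 1, 2, 3}"
    by auto
  then have reindex: "(\<Sum>k\<in>UNIV. f (r $ k)) = f 0 + f 1 + f 2 + f 3" for f :: "int \<Rightarrow> int"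
    using sum.reindex_bij_betw[OF assms, of f] by simp
  show ?thesis
    using reindex[of "\<lambda>x. x^2"] reindex[of "\<lambda>x. x"] unfolding Q_D_def by simp
qed

lemma Q_D_eq_4_misses_residue_mod4:
  assumes "Q_D v = 4"
  obtains r where "r \<in> {0..<4}" and "\<And>k. v $ k mod 4 \<noteq> r"
proof -
  define res where "res = (\<chi> k. v $ k mod 4)"
  have "range (($) res) \<noteq> {0..<4}"
  proof
    assume "range (($) res) = {0..<4}"
    then have "bij_betw (($) res) UNIV {0..<4}"
      by (intro bij_betw_imageI eq_card_imp_inj_on) auto
    then have "Q_D res = -8"
      by (rule Q_D_permutation_0123)
    then have "8 dvd Q_D v + 8"
      using Q_D_cong_mod8_residues[of v] unfolding res_def by simp
    with assms show False
      by simp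
  qed
  moreover have "range (($) res) \<subseteq> {0..<4}"
    by (auto simp: res_def)
  ultimately obtain r where "r \<in> {0..<4}" and "r \<notin> range (($) res)"
    by blast
  then show thesis
    using that unfolding res_def by auto
qed

lemma card_missing_residues_ge:
  fixes m n r :: int
  assumes "m > 0" and "m dvd n" and "r \<in> {0..<m}" and "\<And>c. c \<in> C \<Longrightarrow> c mod m \<noteq> r"
  shows "nat (n div m) \<le> card ({0..<n} - (\<lambda>c. c mod n) ` C)"
proof -
  let ?lift = "\<lambda>j. r + m * j"
  have "?lift ` {0..<n div m} \<subseteq> {0..<n} - (\<lambda>c. c mod n) ` C"
  proof
    fix x assume "x \<in> ?lift ` {0..<n div m}"
    then obtain j where j: "0 \<le> j" "j < n div m" and x: "x = r + m * j"
      by auto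
    have "m * j \<le> m * (n div m - 1)"
      using j assms(1) by (intro mult_left_mono) auto
    moreover have "m * (n div m) = n"
      using assms(2) by simp
    ultimately have x_range: "x \<in> {0..<n}"
      using x j assms(1,3) by (auto simp: algebra_simps)
    have "x mod m = r"
      using x assms(3) by simp
    moreover have "c mod n mod m = c mod m" for c
      using assms(2) by (rule mod_mod_cancel)
    ultimately have "x \<noteq> c mod n" if "c \<in> C" for c
      using assms(4)[OF that] by auto
    then show "x \<in> {0..<n} - (\<lambda>c. c mod n) ` C"
      using x_range by auto
  qed
  moreover have "card (?lift ` {0..<n div m}) = nat (n div m)"
    using assms(1) by (subst card_image) (auto simp: inj_on_def)
  ultimately show ?thesis
    by (metis card_mono finite_Diff finite_atLeastLessThan_int)
qed

theorem theorem5p2: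
  fixes v :: "int ^ 4"
  assumes "Q_D v = 4"
  shows "card ({0..<12::int} - (\<lambda>c. c mod 12) ` curvatures v) \<ge> 3"
proof -
  obtain r where r: "r \<in> {0..<4}" and misses: "\<And>k. v $ k mod 4 \<noteq> r"
    using Q_D_eq_4_misses_residue_mod4[OF assms] by blast
  have even: "even (\<Sum>j\<in>UNIV. v $ j)"
    using assms by (intro even_sum_if_even_Q_D) simp
  have "c mod 4 \<noteq> r" if "c \<in> curvatures v" for c
  proof -
    from that obtain w k where "w \<in> apollonian_orbit v" and "c = w $ k"
      unfolding curvatures_def by blast
    then show ?thesis
      using apollonian_orbit_cong_mod4[OF even] misses by metis
  qed
  from card_missing_residues_ge[of 4 12 r, OF _ _ r this] show ?thesis
    by simp
qed

end
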